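(* Every $\mathbb{F}_q$-subplane of $\mathrm{PG}(2,q^n)$ external to $l_\infty$ is equivalent, under the stabiliser of $l_\infty$ in $\mathrm{PGL}(3,q^n)$, to $\pi_{\omega,\lambda}$ for some $\omega,\lambda\in\mathbb{F}_{q^n}$ such that $1,\omega,\lambda$ are linearly independent over $\mathbb{F}_q$. Every $\mathbb{F}_q$-subplane tangent to $l_\infty$ is equivalent under this stabiliser to $\pi_{\omega,0}$ for some $\omega\in\mathbb{F}_{q^n}\setminus\mathbb{F}_q$.
   Context: Points of $\mathrm{PG}(2,q^n)$ are written $(a,b,c)_{\mathbb{F}_{q^n}}$; $l_\infty$ is the line $c=0$. An $\mathbb{F}_q$-subplane is a set $\{(su+tv+wz)_{\mathbb{F}_{q^n}}:(s,t,w)\in\mathbb{F}_q^3\setminus\{0\}\}$ for $\mathbb{F}_{q^n}$-independent $u,v,z\in\mathbb{F}_{q^n}^3$; it is external to $l_\infty$ if it has no point on $l_\infty$ and tangent if exactly one. For $\omega,\lambda\in\mathbb{F}_{q^n}$, $\pi_{\omega,\lambda}=\{(s,u,s\lambda+u\omega+t)_{\mathbb{F}_{q^n}}:(s,t,u)\in\mathbb{F}_q^3\setminus\{0\}\}$, the $\mathbb{F}_q$-subplane determined by the vectors $(1,0,\lambda),(0,1,\omega),(0,0,1)$. *)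

theory Defs
  imports "HOL-Analysis.Analysis"
begin

text \<open>Ambient field: a finite field 'a (playing F_{q^n}); F is a subfield (playing F_q).
 Vectors of 'a^3, matrices 'a^3^3. A projective point is the set of nonzero
 scalar multiples of a nonzero vector.\<close>

definition is_subfield :: "'a::field set \<Rightarrow> bool" where
  "is_subfield F \<longleftrightarrow> 0 \<in> F \<and> 1 \<in> F \<and>
     (\<forall>x\<in>F. \<forall>y\<in>F. x + y \<in> F \<and> x * y \<in> F) \<and>
     (\<forall>x\<in>F. - x \<in> F) \<and> (\<forall>x\<in>F. x \<noteq> 0 \<longrightarrow> inverse x \<in> F)"

definition ppoint :: "'a::field ^ 3 \<Rightarrow> ('a ^ 3) set" where
  "ppoint v = {c *s v | c. c \<noteq> 0}"

definition PG2 :: "('a::field ^ 3) set set" where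
  "PG2 = {ppoint v | v. v \<noteq> 0}"

definition l_inf :: "('a::field ^ 3) set set" where
  "l_inf = {ppoint v | v. v \<noteq> 0 \<and> v $ 3 = 0}"

definition indep3 :: "'a::field ^ 3 \<Rightarrow> 'a ^ 3 \<Rightarrow> 'a ^ 3 \<Rightarrow> bool" where
  "indep3 u v z \<longleftrightarrow> (\<forall>a b c. a *s u + b *s v + c *s z = 0 \<longrightarrow> a = 0 \<and> b = 0 \<and> c = 0)"

definition subplane_of :: "'a::field set \<Rightarrow> 'a ^ 3 \<Rightarrow> 'a ^ 3 \<Rightarrow> 'a ^ 3 \<Rightarrow> ('a ^ 3) set set" where
  "subplane_of F u v z =
     {ppoint (s *s u + t *s v + w *s z) | s t w. s \<in> F \<and> t \<in> F \<and> w \<in> F \<and> (s, t, w) \<noteq> (0, 0, 0)}"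

definition is_Fq_subplane :: "'a::field set \<Rightarrow> ('a ^ 3) set set \<Rightarrow> bool" where
  "is_Fq_subplane F S \<longleftrightarrow> (\<exists>u v z. indep3 u v z \<and> S = subplane_of F u v z)"

definition external_linf :: "('a::field ^ 3) set set \<Rightarrow> bool" where
  "external_linf S \<longleftrightarrow> S \<inter> l_inf = {}"

definition tangent_linf :: "('a::field ^ 3) set set \<Rightarrow> bool" where
  "tangent_linf S \<longleftrightarrow> card (S \<inter> l_inf) = 1"

definition pmap :: "'a::field ^ 3 ^ 3 \<Rightarrow> ('a ^ 3) set \<Rightarrow> ('a ^ 3) set" where
  "pmap M P = (\<lambda>x. M *v x) ` P"

definition equiv_linf_stab :: "('a::field ^ 3) set set \<Rightarrow> ('a ^ 3) set set \<Rightarrow> bool" where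
  "equiv_linf_stab S T \<longleftrightarrow>
     (\<exists>M :: 'a ^ 3 ^ 3. invertible M \<and> pmap M ` l_inf = l_inf \<and> pmap M ` S = T)"

definition pi_wl :: "'a::field set \<Rightarrow> 'a \<Rightarrow> 'a \<Rightarrow> ('a ^ 3) set set" where
  "pi_wl F om lam = {ppoint (vector [s, u, s * lam + u * om + t]) | s t u.
      s \<in> F \<and> t \<in> F \<and> u \<in> F \<and> (s, t, u) \<noteq> (0, 0, 0)}"

definition lin_indep3_over :: "'a::field set \<Rightarrow> 'a \<Rightarrow> 'a \<Rightarrow> 'a \<Rightarrow> bool" where
  "lin_indep3_over F x y z \<longleftrightarrow>
     (\<forall>a\<in>F. \<forall>b\<in>F. \<forall>c\<in>F. a * x + b * y + c * z = 0 \<longrightarrow> a = 0 \<and> b = 0 \<and> c = 0)"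

end

theory Submission
  imports Defs
begin

(* An F-subplane spanned by an independent triple u, v, z with z off l_inf is mapped, by the
   matrix sending u, v, z to (1,0,lam), (0,1,om), (0,0,1), onto pi_{om,lam} with om = v3/z3 and
   lam = u3/z3. In terms of the coordinates of its argument this matrix divides the third
   coordinate by z3, so it stabilises l_inf (subplane_normal_form).

   External subplanes: no nontrivial F-combination of u3, v3, z3 vanishes, which says precisely
   that 1, om, lam are independent over F. Tangent subplanes: after an F-change of basis of the
   subplane (reordering and shearing the spanning vectors) the tangent point is u, so lam = 0,
   and uniqueness of the tangent point forces om to lie outside F. *)

lemma vec3_eq_iff: "(x::'a^3) = y \<longleftrightarrow> x$1 = y$1 \<and> x$2 = y$2 \<and> x$3 = y$3"
  unfolding vec_eq_iff forall_3 by simp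

lemma subfield_closed:
  assumes "is_subfield F"
  shows "0 \<in> F" "1 \<in> F" "x \<in> F \<Longrightarrow> - x \<in> F" "x \<in> F \<Longrightarrow> y \<in> F \<Longrightarrow> x + y \<in> F"
    "x \<in> F \<Longrightarrow> y \<in> F \<Longrightarrow> x - y \<in> F" "x \<in> F \<Longrightarrow> y \<in> F \<Longrightarrow> x * y \<in> F"
    "x \<in> F \<Longrightarrow> y \<in> F \<Longrightarrow> y \<noteq> 0 \<Longrightarrow> x / y \<in> F"
  using assms unfolding is_subfield_def
  by (auto simp: divide_inverse) (metis diff_conv_add_uminus)

lemma ppoint_eq_imp_proportional:
  assumes "ppoint x = ppoint y"
  shows "\<exists>c. c \<noteq> 0 \<and> x = c *s y"
proof -
  have "x \<in> ppoint x" unfolding ppoint_def by (rule CollectI, rule exI[of _ 1]) simp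
  then show ?thesis using assms unfolding ppoint_def by blast
qed

lemma pmap_ppoint: "pmap M (ppoint x) = ppoint (M *v x)"
  unfolding pmap_def ppoint_def
proof (auto simp: vector_scalar_commute)
  fix c :: 'a assume "c \<noteq> 0"
  then show "c *s (M *v x) \<in> (*v) M ` {c *s x |c. c \<noteq> 0}"
    by (intro image_eqI[of _ _ "c *s x"]) (auto simp: vector_scalar_commute)
qed

definition colm :: "'a::field^3 \<Rightarrow> 'a^3 \<Rightarrow> 'a^3 \<Rightarrow> 'a^3^3" where
  "colm u v z = (\<chi> i j. if j = 1 then u$i else if j = 2 then v$i else z$i)"

lemma colm_mult: "colm u v z *v x = (x$1) *s u + (x$2) *s v + (x$3) *s z"
  by (simp add: vec_eq_iff colm_def matrix_vector_mult_def sum_3 mult.commute)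

lemma colm_invertible:
  assumes "indep3 u v z" shows "invertible (colm u v z)"
proof -
  have "inj ((*v) (colm u v z))"
  proof (rule injI)
    fix x y assume "colm u v z *v x = colm u v z *v y"
    then have "(x$1 - y$1) *s u + (x$2 - y$2) *s v + (x$3 - y$3) *s z = 0"
      by (simp add: colm_mult vec_eq_iff algebra_simps)
    then have "x$1 - y$1 = 0 \<and> x$2 - y$2 = 0 \<and> x$3 - y$3 = 0"
      using assms unfolding indep3_def by blast
    then show "x = y" by (simp add: vec3_eq_iff)
  qed
  then show ?thesis
    using det_nz_iff_inj_gen[OF matrix_vector_mul_linear_gen, of "colm u v z"]
    by (simp add: matrix_of_matrix_vector_mul invertible_det_nz)
qed

lemma indep3_spans:
  assumes "indep3 u v z"
  obtains a b c where "y = a *s u + b *s v + c *s z"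
proof -
  obtain P' where "colm u v z ** P' = mat 1"
    using colm_invertible[OF assms] unfolding invertible_def by blast
  then have "y = colm u v z *v (P' *v y)" by (simp add: matrix_vector_mul_assoc)
  then show ?thesis using that by (simp add: colm_mult)
qed

lemma matrix_vector_lincomb:
  fixes M :: "'a::field^'n^'m"
  shows "M *v (s *s u + t *s v + w *s z) = s *s (M *v u) + t *s (M *v v) + w *s (M *v z)"
  by (simp add: matrix_vector_right_distrib vector_scalar_commute)

lemma basis_transfer_matrix:
  fixes u v z u' v' z' :: "'a::field^3"
  assumes ind: "indep3 u v z" and ind': "indep3 u' v' z'"
  obtains M where "invertible M" "M *v u = u'" "M *v v = v'" "M *v z = z'"
proof -
  obtain P' where P'P: "P' ** colm u v z = mat 1"
    using colm_invertible[OF ind] unfolding invertible_def by blast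
  define M where "M = colm u' v' z' ** P'"
  have M_on_colm: "M *v (colm u v z *v x) = colm u' v' z' *v x" for x
    by (simp add: M_def matrix_vector_mul_assoc matrix_mul_assoc[symmetric] P'P)
  have "invertible P'"
    using P'P matrix_left_right_inverse unfolding invertible_def by blast
  then have "invertible M"
    unfolding M_def using colm_invertible[OF ind'] by (rule invertible_mult[rotated])
  moreover have "M *v u = u'" "M *v v = v'" "M *v z = z'"
    using M_on_colm[of "vector [1,0,0]"] M_on_colm[of "vector [0,1,0]"]
      M_on_colm[of "vector [0,0,1]"] by (simp_all add: colm_mult)
  ultimately show ?thesis using that by blast
qed

lemma indep3_lincomb_nonzero:
  "indep3 u v z \<Longrightarrow> (s, t, w) \<noteq> (0, 0, 0) \<Longrightarrow> s *s u + t *s v + w *s z \<noteq> 0"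
  unfolding indep3_def by blast

lemma subplane_point_on_linf:
  assumes "indep3 u v z" "s \<in> F" "t \<in> F" "w \<in> F" "(s, t, w) \<noteq> (0, 0, 0)"
    and "(s *s u + t *s v + w *s z)$3 = 0"
  shows "ppoint (s *s u + t *s v + w *s z) \<in> subplane_of F u v z \<inter> l_inf"
  using assms indep3_lincomb_nonzero unfolding subplane_of_def l_inf_def by blast

lemma subplane_linf_point_coords:
  assumes "Q \<in> subplane_of F u v z \<inter> l_inf"
  obtains s t w where "s \<in> F" "t \<in> F" "w \<in> F" "(s, t, w) \<noteq> (0, 0, 0)"
    "Q = ppoint (s *s u + t *s v + w *s z)" "(s *s u + t *s v + w *s z)$3 = 0"
proof -
  obtain s t w x where coords: "s \<in> F" "t \<in> F" "w \<in> F" "(s, t, w) \<noteq> (0, 0, 0)"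
      "Q = ppoint (s *s u + t *s v + w *s z)" and x: "Q = ppoint x" "x$3 = 0"
    using assms unfolding subplane_of_def l_inf_def by blast
  obtain c where "s *s u + t *s v + w *s z = c *s x"
    using ppoint_eq_imp_proportional coords(5) x(1) by metis
  then have "(s *s u + t *s v + w *s z)$3 = 0" using x(2) by simp
  then show ?thesis using that coords by blast
qed

lemma pmap_subplane:
  "pmap M ` subplane_of F u v z = subplane_of F (M *v u) (M *v v) (M *v z)"
proof -
  have "pmap M ` subplane_of F u v z = {pmap M (ppoint (s *s u + t *s v + w *s z)) | s t w.
          s \<in> F \<and> t \<in> F \<and> w \<in> F \<and> (s, t, w) \<noteq> (0, 0, 0)}"
    unfolding subplane_of_def by blast
  then show ?thesis
    unfolding subplane_of_def by (simp only: pmap_ppoint matrix_vector_lincomb)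
qed

lemma std_basis_indep:
  "indep3 (vector [1, 0, lam]) (vector [0, 1, om]) (vector [0, 0, 1::'a::field])"
  unfolding indep3_def by (simp add: vec3_eq_iff)

lemma pi_wl_as_subplane:
  "pi_wl F om lam = subplane_of F (vector [1, 0, lam]) (vector [0, 1, om]) (vector [0, 0, 1])"
proof -
  have coords: "s *s vector [1, 0, lam] + t *s vector [0, 1, om] + w *s vector [0, 0, 1]
        = (vector [s, t, s * lam + t * om + w] :: 'a^3)" for s t w :: 'a
    by (simp add: vec3_eq_iff)
  have "(s, t, w) \<noteq> (0, 0, 0) \<longleftrightarrow> (s, w, t) \<noteq> (0, 0, 0)" for s t w :: 'a
    by auto
  then show ?thesis unfolding pi_wl_def subplane_of_def coords by blast
qed

lemma subplane_swap12: "subplane_of F u v z = subplane_of F v u z"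
  unfolding subplane_of_def by (auto simp: add.commute) (metis add.commute)+

lemma indep3_swap12: "indep3 u v z \<Longrightarrow> indep3 v u z"
  unfolding indep3_def by (metis add.commute)

lemma subplane_swap13: "subplane_of F u v z = subplane_of F z v u"
proof -
  have reorder: "s *s u + t *s v + w *s z = w *s z + t *s v + s *s u" for s t w :: 'a
    by (simp add: add_ac)
  have "(s, t, w) \<noteq> (0, 0, 0) \<longleftrightarrow> (w, t, s) \<noteq> (0, 0, 0)" for s t w :: 'a by auto
  then show ?thesis unfolding subplane_of_def reorder by blast
qed

lemma indep3_swap13:
  assumes "indep3 u v z" shows "indep3 z v u"
proof -
  have "a *s z + b *s v + c *s u = c *s u + b *s v + a *s z" for a b c :: 'a
    by (simp add: add_ac)
  then show ?thesis using assms unfolding indep3_def by metis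
qed

(* Adding F-multiples of v and z to u only reparametrises the points of the subplane. *)
lemma shear_lincomb:
  fixes u v z :: "'a::field^'n"
  shows "s *s (u + b *s v + c *s z) + t *s v + w *s z = s *s u + (s * b + t) *s v + (s * c + w) *s z"
  by (simp add: vec_eq_iff algebra_simps)

lemma subplane_shear:
  assumes F: "is_subfield F" and b: "b \<in> F" and c: "c \<in> F"
  shows "subplane_of F (u + b *s v + c *s z) v z = subplane_of F u v z"
proof -
  have closed: "s * b + t \<in> F" "s * c + w \<in> F" "t - s * b \<in> F" "w - s * c \<in> F"
    if "s \<in> F" "t \<in> F" "w \<in> F" for s t w
    using that b c by (simp_all add: subfield_closed[OF F])
  show ?thesis
  proof
    show "subplane_of F (u + b *s v + c *s z) v z \<subseteq> subplane_of F u v z"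
    proof
      fix Q assume "Q \<in> subplane_of F (u + b *s v + c *s z) v z"
      then obtain s t w where Q: "Q = ppoint (s *s u + (s * b + t) *s v + (s * c + w) *s z)"
        "s \<in> F" "t \<in> F" "w \<in> F" "(s, t, w) \<noteq> (0, 0, 0)"
        unfolding subplane_of_def shear_lincomb by blast
      have "(s, s * b + t, s * c + w) \<noteq> (0, 0, 0)" using Q(5) by auto
      moreover have "s * b + t \<in> F" "s * c + w \<in> F" using closed Q(2-4) by auto
      ultimately show "Q \<in> subplane_of F u v z" unfolding subplane_of_def Q(1) using Q(2) by blast
    qed
    show "subplane_of F u v z \<subseteq> subplane_of F (u + b *s v + c *s z) v z"
    proof
      fix Q assume "Q \<in> subplane_of F u v z"
      then obtain s t w where Q: "Q = ppoint (s *s u + t *s v + w *s z)"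
        "s \<in> F" "t \<in> F" "w \<in> F" "(s, t, w) \<noteq> (0, 0, 0)"
        unfolding subplane_of_def by blast
      have unshear: "s *s u + t *s v + w *s z
          = s *s (u + b *s v + c *s z) + (t - s * b) *s v + (w - s * c) *s z"
        by (simp add: shear_lincomb)
      have "(s, t - s * b, w - s * c) \<noteq> (0, 0, 0)" using Q(5) by auto
      moreover have "t - s * b \<in> F" "w - s * c \<in> F" using closed Q(2-4) by auto
      ultimately show "Q \<in> subplane_of F (u + b *s v + c *s z) v z"
        unfolding subplane_of_def Q(1) unshear using Q(2) by blast
    qed
  qed
qed

lemma indep3_shear:
  fixes u v z :: "'a::field^3"
  assumes "indep3 u v z" shows "indep3 (u + b *s v + c *s z) v z"
  unfolding indep3_def shear_lincomb
proof (intro allI impI)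
  fix s t w :: 'a assume "s *s u + (s * b + t) *s v + (s * c + w) *s z = 0"
  then have "s = 0 \<and> s * b + t = 0 \<and> s * c + w = 0" using assms unfolding indep3_def by blast
  then show "s = 0 \<and> t = 0 \<and> w = 0" by auto
qed

lemma basis_through_point:
  fixes u v z :: "'a::field^3"
  assumes F: "is_subfield F" and ind: "indep3 u v z"
    and coeffs: "s \<in> F" "t \<in> F" "w \<in> F" "(s, t, w) \<noteq> (0, 0, 0)"
  obtains u' v' z' c where "c \<noteq> 0" "u' = c *s (s *s u + t *s v + w *s z)"
    "indep3 u' v' z'" "subplane_of F u' v' z' = subplane_of F u v z"
proof -
  have leading: "\<exists>u' v' z' c. c \<noteq> 0 \<and> u' = c *s (s *s u + t *s v + w *s z) \<and>
      indep3 u' v' z' \<and> subplane_of F u' v' z' = subplane_of F u v z"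
    if ind: "indep3 u v z" and F_coeffs: "s \<in> F" "t \<in> F" "w \<in> F" and "s \<noteq> 0"
    for u v z :: "'a^3" and s t w
  proof -
    define u' where "u' = u + (t / s) *s v + (w / s) *s z"
    have "u' = (1 / s) *s (s *s u + t *s v + w *s z)"
      unfolding u'_def using \<open>s \<noteq> 0\<close> by (simp add: vec_eq_iff field_simps)
    moreover have "indep3 u' v z" unfolding u'_def using ind by (rule indep3_shear)
    moreover have "subplane_of F u' v z = subplane_of F u v z"
      unfolding u'_def using F_coeffs \<open>s \<noteq> 0\<close>
      by (intro subplane_shear[OF F]) (simp_all add: subfield_closed[OF F])
    moreover have "1 / s \<noteq> 0" using \<open>s \<noteq> 0\<close> by simp
    ultimately show ?thesis by blast
  qed
  have "s *s u + t *s v + w *s z = t *s v + s *s u + w *s z"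
    and "s *s u + t *s v + w *s z = w *s z + t *s v + s *s u"
    by (simp_all add: add_ac)
  moreover consider "s \<noteq> 0" | "t \<noteq> 0" | "w \<noteq> 0"
    using coeffs(4) by auto
  then have "\<exists>u' v' z' c. c \<noteq> 0 \<and> u' = c *s (s *s u + t *s v + w *s z) \<and>
      indep3 u' v' z' \<and> subplane_of F u' v' z' = subplane_of F u v z"
  proof cases
    case 1
    then show ?thesis using leading[OF ind coeffs(1-3)] by blast
  next
    case 2
    then show ?thesis
      using leading[OF indep3_swap12[OF ind] coeffs(2,1,3)] calculation(1)
      unfolding subplane_swap12[of F v u z, symmetric] by metis
  next
    case 3
    then show ?thesis
      using leading[OF indep3_swap13[OF ind] coeffs(3,2,1)] calculation(2)
      unfolding subplane_swap13[of F z v u, symmetric] by metis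
  qed
  then show ?thesis using that by blast
qed

lemma linf_stabiliser:
  fixes M :: "'a::field^3^3"
  assumes inv: "invertible M" and third: "\<And>y. (M *v y)$3 = 0 \<longleftrightarrow> y$3 = 0"
  shows "pmap M ` l_inf = l_inf"
proof -
  obtain N where MN: "M ** N = mat 1" and NM: "N ** M = mat 1"
    using inv unfolding invertible_def by blast
  have nonzero: "M *v x \<noteq> 0" if "x \<noteq> 0" for x
  proof
    assume "M *v x = 0"
    then have "N *v (M *v x) = 0" by simp
    then show False using that by (simp add: matrix_vector_mul_assoc NM)
  qed
  have "l_inf \<subseteq> pmap M ` l_inf"
  proof
    fix Q assume "Q \<in> (l_inf :: ('a^3) set set)"
    then obtain w where w: "Q = ppoint w" "w \<noteq> 0" "w$3 = 0" unfolding l_inf_def by blast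
    have Mw: "M *v (N *v w) = w" by (simp add: matrix_vector_mul_assoc MN)
    then have "ppoint (N *v w) \<in> l_inf"
      using w third[of "N *v w"] unfolding l_inf_def by force
    then show "Q \<in> pmap M ` l_inf" using w(1) Mw by (metis image_eqI pmap_ppoint)
  qed
  moreover have "pmap M ` l_inf \<subseteq> l_inf"
    unfolding l_inf_def using nonzero third by (auto simp: pmap_ppoint)
  ultimately show ?thesis by blast
qed

lemma subplane_normal_form:
  fixes u v z :: "'a::field^3"
  assumes ind: "indep3 u v z" and z3: "z$3 \<noteq> 0"
  shows "equiv_linf_stab (subplane_of F u v z) (pi_wl F (v$3 / z$3) (u$3 / z$3))"
proof -
  define lam om where "lam = u$3 / z$3" and "om = v$3 / z$3"
  obtain M :: "'a^3^3" where M: "invertible M"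
    "M *v u = vector [1, 0, lam]" "M *v v = vector [0, 1, om]" "M *v z = vector [0, 0, 1]"
    by (rule basis_transfer_matrix[OF ind std_basis_indep])
  have third: "(M *v y)$3 = y$3 / z$3" for y
  proof -
    obtain a b c where y: "y = a *s u + b *s v + c *s z" by (rule indep3_spans[OF ind])
    have "(M *v y)$3 = a * lam + b * om + c"
      unfolding y matrix_vector_lincomb M by simp
    also have "\<dots> = y$3 / z$3"
      unfolding y lam_def om_def using z3 by (simp add: field_simps)
    finally show ?thesis .
  qed
  have "pmap M ` l_inf = l_inf"
    by (rule linf_stabiliser[OF M(1)]) (simp add: third z3)
  moreover have "pmap M ` subplane_of F u v z = pi_wl F om lam"
    unfolding pmap_subplane M pi_wl_as_subplane ..
  ultimately have "equiv_linf_stab (subplane_of F u v z) (pi_wl F om lam)"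
    unfolding equiv_linf_stab_def using M(1) by (intro exI[of _ M]) simp
  then show ?thesis by (simp only: lam_def om_def)
qed

(* External subplanes: no nontrivial F-combination of u3, v3, z3 vanishes, so z3 is
  nonzero and 1, v3/z3, u3/z3 are F-independent. *)
lemma external_normal_form:
  fixes u v z :: "'a::field^3"
  assumes F: "is_subfield F" and ind: "indep3 u v z"
    and ext: "external_linf (subplane_of F u v z)"
  shows "\<exists>om lam. lin_indep3_over F 1 om lam \<and>
           equiv_linf_stab (subplane_of F u v z) (pi_wl F om lam)"
proof -
  have off_linf: "(s *s u + t *s v + w *s z)$3 \<noteq> 0"
    if "s \<in> F" "t \<in> F" "w \<in> F" "(s, t, w) \<noteq> (0, 0, 0)" for s t w
    using subplane_point_on_linf[OF ind that] ext unfolding external_linf_def by blast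
  have z3: "z$3 \<noteq> 0" using off_linf[of 0 0 1] subfield_closed[OF F] by simp
  have "lin_indep3_over F 1 (v$3 / z$3) (u$3 / z$3)"
    unfolding lin_indep3_over_def
  proof (intro ballI impI)
    fix a b c assume abc: "a \<in> F" "b \<in> F" "c \<in> F"
      and "a * 1 + b * (v$3 / z$3) + c * (u$3 / z$3) = 0"
    then have "(c *s u + b *s v + a *s z)$3 = 0" using z3 by (simp add: field_simps)
    then show "a = 0 \<and> b = 0 \<and> c = 0" using off_linf[OF abc(3,2,1)] by auto
  qed
  then show ?thesis using subplane_normal_form[OF ind z3] by blast
qed

(* Tangent subplanes whose first spanning vector u is the tangent point: uniqueness of
  the tangent point forces t v3 + w z3 to be nonzero for (t,w) nonzero over F, hence z3 is
  nonzero and v3/z3 lies outside F. *)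
lemma tangent_normal_form_first_at_infinity:
  fixes u v z :: "'a::field^3"
  assumes F: "is_subfield F" and ind: "indep3 u v z" and u3: "u$3 = 0"
    and tan: "tangent_linf (subplane_of F u v z)"
  shows "\<exists>\<omega>. \<omega> \<notin> F \<and> equiv_linf_stab (subplane_of F u v z) (pi_wl F \<omega> 0)"
proof -
  let ?S = "subplane_of F u v z"
  obtain Q where single: "?S \<inter> l_inf = {Q}"
    using tan unfolding tangent_linf_def by (rule card_1_singletonE)
  have only_u: "t = 0 \<and> w = 0" if tw: "t \<in> F" "w \<in> F" "t * v$3 + w * z$3 = 0" for t w
  proof (rule ccontr)
    assume nz: "\<not> (t = 0 \<and> w = 0)"
    have "ppoint (1 *s u + 0 *s v + 0 *s z) \<in> ?S \<inter> l_inf"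
      by (rule subplane_point_on_linf) (use ind u3 subfield_closed[OF F] in auto)
    moreover have "ppoint (0 *s u + t *s v + w *s z) \<in> ?S \<inter> l_inf"
      by (rule subplane_point_on_linf)
        (use ind tw nz subfield_closed[OF F] in \<open>auto simp: mult.commute\<close>)
    ultimately have "ppoint u = ppoint (t *s v + w *s z)" using single by simp
    then obtain c where "u = c *s (t *s v + w *s z)" using ppoint_eq_imp_proportional by blast
    then have "1 *s u + (- (c * t)) *s v + (- (c * w)) *s z = 0"
      by (simp add: vec_eq_iff algebra_simps)
    then show False using ind unfolding indep3_def by fastforce
  qed
  have z3: "z$3 \<noteq> 0" using only_u[of 0 1] subfield_closed[OF F] by auto
  have "v$3 / z$3 \<notin> F"
  proof
    assume "v$3 / z$3 \<in> F"
    then have "- (v$3 / z$3) \<in> F" using subfield_closed[OF F] by auto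
    moreover have "1 * v$3 + (- (v$3 / z$3)) * z$3 = 0" using z3 by simp
    ultimately have "(1::'a) = 0" using only_u subfield_closed(2)[OF F] by blast
    then show False by simp
  qed
  then show ?thesis using subplane_normal_form[OF ind z3] u3 by auto
qed

(* Tangent subplanes in general: move the tangent point into first position. *)
lemma tangent_normal_form:
  fixes u v z :: "'a::field^3"
  assumes F: "is_subfield F" and ind: "indep3 u v z"
    and tan: "tangent_linf (subplane_of F u v z)"
  shows "\<exists>\<omega>. \<omega> \<notin> F \<and> equiv_linf_stab (subplane_of F u v z) (pi_wl F \<omega> 0)"
proof -
  obtain Q where "Q \<in> subplane_of F u v z \<inter> l_inf"
    using tan unfolding tangent_linf_def by (metis card_1_singletonE insertI1)
  then obtain s t w where coeffs: "s \<in> F" "t \<in> F" "w \<in> F" "(s, t, w) \<noteq> (0, 0, 0)"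
    and on_linf: "(s *s u + t *s v + w *s z)$3 = 0"
    by (rule subplane_linf_point_coords)
  obtain u' v' z' c where u': "u' = c *s (s *s u + t *s v + w *s z)" and ind': "indep3 u' v' z'"
    and same: "subplane_of F u' v' z' = subplane_of F u v z"
    using basis_through_point[OF F ind coeffs] .
  have "u'$3 = 0" unfolding u' vector_smult_component on_linf by simp
  from tangent_normal_form_first_at_infinity[OF F ind' this] show ?thesis
    using tan unfolding same .
qed

theorem lemma3p2:
  fixes F :: "'a::{field,finite} set"
  assumes "is_subfield F"
  shows "(\<forall>S. is_Fq_subplane F S \<and> external_linf S \<longrightarrow>
            (\<exists>om lam. lin_indep3_over F 1 om lam \<and> equiv_linf_stab S (pi_wl F om lam)))
       \<and> (\<forall>S. is_Fq_subplane F S \<and> tangent_linf S \<longrightarrow>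
            (\<exists>\<omega>. \<omega> \<notin> F \<and> equiv_linf_stab S (pi_wl F \<omega> 0)))"
  using external_normal_form[OF assms] tangent_normal_form[OF assms]
  unfolding is_Fq_subplane_def by blast

end
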